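(* For every acyclic weighted digraph $D$ in which every arc has weight at least $1$, $\mathrm{mac}(D)\ge\frac{w(D)}{4}+\frac{w(D)^{0.6}}{24}$.
   Context: A weighted digraph $D=(V,A,w)$ is a digraph without loops or parallel arcs (opposite arcs allowed) with weights $w:A\to\mathbb{R}_{\ge0}$; $w(D)$ is the total arc weight. For a partition $(X,Y)$ of $V$, $w(X,Y)$ is the total weight of arcs from $X$ to $Y$, and $\mathrm{mac}(D)=\max_{(X,Y)}w(X,Y)$. Acyclic means containing no directed cycle. *)

theory Defs
  imports Main "HOL-Library.Disjoint_Sets" Complex_Main
begin

text \<open>A weighted digraph (V, A, w): finite vertex set V, arc set A \<subseteq> V \<times> V
  without loops (parallel arcs are excluded since A is a set; opposite arcs are allowed),
  and nonnegative weights w on arcs.\<close>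
definition weighted_digraph :: "'a set \<Rightarrow> ('a \<times> 'a) set \<Rightarrow> ('a \<times> 'a \<Rightarrow> real) \<Rightarrow> bool" where
  "weighted_digraph V A w \<longleftrightarrow> finite V \<and> A \<subseteq> V \<times> V \<and> (\<forall>v. (v, v) \<notin> A)
     \<and> (\<forall>a\<in>A. w a \<ge> 0)"

definition total_weight :: "('a \<times> 'a) set \<Rightarrow> ('a \<times> 'a \<Rightarrow> real) \<Rightarrow> real" where
  "total_weight A w = (\<Sum>a\<in>A. w a)"

definition cut_weight :: "('a \<times> 'a) set \<Rightarrow> ('a \<times> 'a \<Rightarrow> real) \<Rightarrow> 'a set \<Rightarrow> 'a set \<Rightarrow> real" where
  "cut_weight A w X Y = (\<Sum>a\<in>{(x, y) \<in> A. x \<in> X \<and> y \<in> Y}. w a)"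

definition mac :: "'a set \<Rightarrow> ('a \<times> 'a) set \<Rightarrow> ('a \<times> 'a \<Rightarrow> real) \<Rightarrow> real" where
  "mac V A w = Max ((\<lambda>X. cut_weight A w X (V - X)) ` Pow V)"

end

theory Submission
  imports Defs
begin

text \<open>Write \<open>g = mac(D) - w(D)/4\<close> for the surplus and suppose \<open>g < w(D)^{0.6}/24\<close>.
  Rounding a random cut with independent probabilities \<open>(1 + y v)/2\<close> shows
  \<open>w(D)/4 - \<Sum> w(uv) y(u) y(v) / 4 \<le> mac(D)\<close> for every \<open>y\<close> with values in \<open>[-1,1]\<close>; in an
  acyclic digraph a suitable \<open>\<plusminus>1\<close>-vector on the ends of a matching \<open>M\<close> gives \<open>w(M) \<le> 4g\<close>.
  So a maximal matching yields a small vertex cover \<open>Q\<close>, \<open>|Q| \<le> 8g\<close>, and a cut argument shows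
  that almost all weight lies on arcs inside \<open>Q\<close>. Numbering \<open>Q\<close> along a topological order,
  the arcs inside \<open>Q\<close> of span at most \<open>s\<close> split into \<open>2s\<close> matchings, so most weight sits on long
  arcs; but then the potential "position in \<open>Q\<close> divided by \<open>|Q|\<close>" increases along the arcs by
  much more than the bound \<open>\<Sum> w(uv)(t v - t u) \<le> 2 \<surd>(w(D) g)\<close> from the rounding lemma allows.\<close>

lemma weighted_digraphD:
  assumes "weighted_digraph V A w"
  shows "finite V" "A \<subseteq> V \<times> V" "finite A" "\<And>v. (v, v) \<notin> A" "\<And>a. a \<in> A \<Longrightarrow> w a \<ge> 0"
  using assms unfolding weighted_digraph_def
  by (auto intro: finite_subset[of A "V \<times> V"])

lemma cut_weight_le_mac:
  assumes "weighted_digraph V A w" and "X \<subseteq> V"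
  shows "cut_weight A w X (V - X) \<le> mac V A w"
  unfolding mac_def using assms by (intro Max_ge) (auto simp: weighted_digraph_def)

definition mac_surplus :: "'a set \<Rightarrow> ('a \<times> 'a) set \<Rightarrow> ('a \<times> 'a \<Rightarrow> real) \<Rightarrow> real" where
  "mac_surplus V A w = mac V A w - total_weight A w / 4"

lemma card_le_sum_weight:
  assumes "\<forall>a\<in>S. w a \<ge> 1"
  shows "real (card S) \<le> sum w S"
proof -
  have "real (card S) = (\<Sum>a\<in>S. (1::real))" by simp
  also have "\<dots> \<le> sum w S" using assms by (intro sum_mono) auto
  finally show ?thesis .
qed

subsection \<open>Random cuts\<close>

text \<open>The expected value of \<open>w(X, V - X)\<close> when each vertex \<open>v\<close> is put into \<open>X\<close> independently
  with probability \<open>p v\<close>.\<close>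
definition expected_cut :: "('a \<times> 'a) set \<Rightarrow> ('a \<times> 'a \<Rightarrow> real) \<Rightarrow> ('a \<Rightarrow> real) \<Rightarrow> real" where
  "expected_cut A w p = (\<Sum>e\<in>A. w e * p (fst e) * (1 - p (snd e)))"

lemma expected_cut_boolean_le_mac:
  assumes wd: "weighted_digraph V A w" and p01: "\<forall>v\<in>V. p v = 0 \<or> p v = 1"
  shows "expected_cut A w p \<le> mac V A w"
proof -
  note F = weighted_digraphD[OF wd]
  let ?X = "{v\<in>V. p v = 1}"
  have arcs: "{(x, y) \<in> A. x \<in> ?X \<and> y \<in> V - ?X} = {e\<in>A. p (fst e) = 1 \<and> p (snd e) = 0}"
    using F(2) p01 by fastforce
  have "expected_cut A w p = (\<Sum>e\<in>A. if p (fst e) = 1 \<and> p (snd e) = 0 then w e else 0)"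
    unfolding expected_cut_def
  proof (rule sum.cong[OF refl])
    fix e assume "e \<in> A"
    then have "fst e \<in> V" "snd e \<in> V" using F(2) by auto
    then show "w e * p (fst e) * (1 - p (snd e)) = (if p (fst e) = 1 \<and> p (snd e) = 0 then w e else 0)"
      using p01 by fastforce
  qed
  also have "\<dots> = cut_weight A w ?X (V - ?X)"
    unfolding cut_weight_def arcs using F(3) by (simp add: sum.inter_filter)
  also have "\<dots> \<le> mac V A w"
    by (rule cut_weight_le_mac[OF wd]) auto
  finally show ?thesis .
qed

lemma expected_cut_split:
  assumes "\<And>v. (v, v) \<notin> A"
  shows "expected_cut A w p = (1 - p z) * expected_cut A w (p(z := 0)) + p z * expected_cut A w (p(z := 1))"
  unfolding expected_cut_def sum_distrib_left sum.distrib[symmetric]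
proof (rule sum.cong[OF refl])
  fix e assume "e \<in> A"
  obtain a b where e: "e = (a, b)" by force
  with assms \<open>e \<in> A\<close> have "a \<noteq> b" by auto
  then show "w e * p (fst e) * (1 - p (snd e)) =
     (1 - p z) * (w e * (p(z := 0)) (fst e) * (1 - (p(z := 0)) (snd e))) +
     p z * (w e * (p(z := 1)) (fst e) * (1 - (p(z := 1)) (snd e)))"
    unfolding e by (cases "a = z"; cases "b = z") (auto simp: algebra_simps)
qed

lemma expected_cut_le_mac:
  assumes wd: "weighted_digraph V A w" and p: "\<forall>v\<in>V. 0 \<le> p v \<and> p v \<le> 1"
  shows "expected_cut A w p \<le> mac V A w"
proof -
  have "expected_cut A w p \<le> mac V A w"
    if "finite S" "\<forall>v\<in>V. 0 \<le> p v \<and> p v \<le> 1" "\<forall>v\<in>V - S. p v = 0 \<or> p v = 1" for S p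
    using that
  proof (induction S arbitrary: p rule: finite_induct)
    case empty
    then show ?case using expected_cut_boolean_le_mac[OF wd] by auto
  next
    case (insert z S)
    have fixed: "expected_cut A w (p(z := c)) \<le> mac V A w" if "c = 0 \<or> c = 1" for c
    proof -
      have "\<forall>v\<in>V. 0 \<le> (p(z := c)) v \<and> (p(z := c)) v \<le> 1"
        and "\<forall>v\<in>V - S. (p(z := c)) v = 0 \<or> (p(z := c)) v = 1"
        using insert.prems that by auto
      then show ?thesis by (rule insert.IH)
    qed
    show ?case
    proof (cases "z \<in> V")
      case True
      then have pz: "0 \<le> p z" "p z \<le> 1" using insert.prems by auto
      have "expected_cut A w p
          = (1 - p z) * expected_cut A w (p(z := 0)) + p z * expected_cut A w (p(z := 1))"
        by (rule expected_cut_split) (use weighted_digraphD[OF wd] in auto)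
      also have "\<dots> \<le> (1 - p z) * mac V A w + p z * mac V A w"
        by (intro add_mono mult_left_mono fixed) (use pz in auto)
      finally show ?thesis by (simp add: algebra_simps)
    next
      case False
      then show ?thesis using insert.IH insert.prems by auto
    qed
  qed
  then show ?thesis using p weighted_digraphD(1)[OF wd] by blast
qed

definition arc_product_sum :: "('a \<times> 'a) set \<Rightarrow> ('a \<times> 'a \<Rightarrow> real) \<Rightarrow> ('a \<Rightarrow> real) \<Rightarrow> real" where
  "arc_product_sum A w y = (\<Sum>e\<in>A. w e * y (fst e) * y (snd e))"

definition arc_difference_sum :: "('a \<times> 'a) set \<Rightarrow> ('a \<times> 'a \<Rightarrow> real) \<Rightarrow> ('a \<Rightarrow> real) \<Rightarrow> real" where
  "arc_difference_sum A w y = (\<Sum>e\<in>A. w e * (y (fst e) - y (snd e)))"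

lemma mac_ge_arc_sums:
  assumes wd: "weighted_digraph V A w" and y: "\<forall>v\<in>V. \<bar>y v\<bar> \<le> 1"
  shows "total_weight A w / 4 + arc_difference_sum A w y / 4 - arc_product_sum A w y / 4 \<le> mac V A w"
proof -
  let ?p = "\<lambda>v. (1 + y v) / 2"
  have "expected_cut A w ?p = (\<Sum>e\<in>A. w e / 4 + w e * (y (fst e) - y (snd e)) / 4
                                      - w e * y (fst e) * y (snd e) / 4)"
    unfolding expected_cut_def by (rule sum.cong[OF refl]) (auto simp: field_simps)
  also have "\<dots> = total_weight A w / 4 + arc_difference_sum A w y / 4 - arc_product_sum A w y / 4"
    unfolding total_weight_def arc_difference_sum_def arc_product_sum_def
    by (simp add: sum.distrib sum_subtractf sum_divide_distrib)
  finally have "expected_cut A w ?p = \<dots>" .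
  moreover have "expected_cut A w ?p \<le> mac V A w"
    by (rule expected_cut_le_mac[OF wd]) (use y in \<open>auto simp: abs_le_iff\<close>)
  ultimately show ?thesis by simp
qed

lemma mac_ge_arc_product_sum:
  assumes wd: "weighted_digraph V A w" and y: "\<forall>v\<in>V. \<bar>y v\<bar> \<le> 1"
  shows "total_weight A w / 4 - arc_product_sum A w y / 4 \<le> mac V A w"
proof -
  have "arc_difference_sum A w (\<lambda>v. - y v) = - arc_difference_sum A w y"
    unfolding arc_difference_sum_def by (simp add: sum_negf[symmetric] algebra_simps)
  moreover have "arc_product_sum A w (\<lambda>v. - y v) = arc_product_sum A w y"
    unfolding arc_product_sum_def by simp
  ultimately show ?thesis
    using mac_ge_arc_sums[OF wd y] mac_ge_arc_sums[OF wd, of "\<lambda>v. - y v"] y by auto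
qed

lemma arc_product_sum_le:
  assumes w: "\<forall>a\<in>A. w a \<ge> 0" and y: "\<forall>v. \<bar>y v\<bar> \<le> c"
  shows "arc_product_sum A w y \<le> c\<^sup>2 * total_weight A w"
  unfolding arc_product_sum_def total_weight_def sum_distrib_left
proof (rule sum_mono)
  fix f assume "f \<in> A"
  have "y (fst f) * y (snd f) \<le> \<bar>y (fst f)\<bar> * \<bar>y (snd f)\<bar>" by (simp add: abs_mult[symmetric])
  also have "\<dots> \<le> c * c" using y by (intro mult_mono) (auto intro: order_trans[OF abs_ge_zero])
  finally have "w f * (y (fst f) * y (snd f)) \<le> w f * c\<^sup>2"
    using w \<open>f \<in> A\<close> by (intro mult_left_mono) (auto simp: power2_eq_square)
  then show "w f * y (fst f) * y (snd f) \<le> c\<^sup>2 * w f" by (simp add: algebra_simps)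
qed

lemma potential_le_surplus:
  assumes wd: "weighted_digraph V A w" and W: "total_weight A w > 0"
    and t01: "\<forall>x. 0 \<le> t x \<and> t x \<le> 1" and mono: "\<forall>f\<in>A. t (fst f) \<le> t (snd f)"
  shows "(\<Sum>f\<in>A. w f * (t (snd f) - t (fst f)))\<^sup>2 \<le> 4 * total_weight A w * mac_surplus V A w"
proof -
  note F = weighted_digraphD[OF wd]
  define W where "W = total_weight A w"
  define L where "L = (\<Sum>f\<in>A. w f * (t (snd f) - t (fst f)))"
  have L0: "L \<ge> 0" unfolding L_def using mono F(5) by (intro sum_nonneg) auto
  have LW: "L \<le> W" unfolding L_def W_def total_weight_def
  proof (rule sum_mono)
    fix f assume "f \<in> A"
    moreover have "t (snd f) - t (fst f) \<le> 1" using t01 by (smt (verit))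
    ultimately show "w f * (t (snd f) - t (fst f)) \<le> w f"
      using F(5) by (metis mult_left_le)
  qed
  have Wp: "W > 0" using W W_def by simp
  \<comment> \<open>scale the centred potential \<open>1 - 2t\<close> by \<open>\<epsilon> = L/W\<close>, the optimal factor\<close>
  define \<epsilon> where "\<epsilon> = L / W"
  have e0: "0 \<le> \<epsilon>" and e1: "\<epsilon> \<le> 1" unfolding \<epsilon>_def using L0 LW Wp by auto
  define y where "y x = \<epsilon> * (1 - 2 * t x)" for x
  have yb: "\<bar>y x\<bar> \<le> \<epsilon>" for x
  proof -
    have "\<bar>1 - 2 * t x\<bar> \<le> 1" using t01 by (smt (verit))
    then show ?thesis unfolding y_def using e0 by (simp add: abs_mult mult_left_le)
  qed
  have "arc_difference_sum A w y = 2 * \<epsilon> * L"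
    unfolding arc_difference_sum_def L_def y_def by (simp add: sum_distrib_left algebra_simps)
  moreover have "arc_product_sum A w y \<le> \<epsilon>\<^sup>2 * W"
    unfolding W_def using F(5) yb by (intro arc_product_sum_le) auto
  moreover have "\<forall>v\<in>V. \<bar>y v\<bar> \<le> 1" using yb e1 by (meson order_trans)
  ultimately have "W / 4 + 2 * \<epsilon> * L / 4 - \<epsilon>\<^sup>2 * W / 4 \<le> mac V A w"
    using mac_ge_arc_sums[OF wd] W_def by fastforce
  moreover have "2 * \<epsilon> * L / 4 - \<epsilon>\<^sup>2 * W / 4 = L\<^sup>2 / (4 * W)"
    unfolding \<epsilon>_def using Wp by (simp add: field_simps power2_eq_square)
  ultimately have "L\<^sup>2 / (4 * W) \<le> mac_surplus V A w" unfolding mac_surplus_def W_def by simp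
  then show ?thesis using Wp unfolding L_def W_def by (simp add: divide_le_eq mult.commute)
qed

subsection \<open>Matchings\<close>

definition matching :: "('a \<times> 'a) set \<Rightarrow> bool" where
  "matching M \<longleftrightarrow> (\<forall>e\<in>M. \<forall>e'\<in>M. e \<noteq> e' \<longrightarrow>
     fst e \<noteq> fst e' \<and> fst e \<noteq> snd e' \<and> snd e \<noteq> fst e' \<and> snd e \<noteq> snd e')"

lemma acyclic_matching_arc_product_sum:
  assumes wd: "weighted_digraph V A w" and acyc: "acyclic A"
    and fin: "finite M" and MA: "M \<subseteq> A" and m: "matching M"
  shows "\<exists>y. (\<forall>v. \<bar>y v\<bar> \<le> 1) \<and> (\<forall>v. v \<notin> fst ` M \<union> snd ` M \<longrightarrow> y v = 0)
           \<and> sum w M \<le> - arc_product_sum A w y"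
  using fin MA m
proof (induction M rule: finite_induct)
  case empty
  show ?case by (rule exI[of _ "\<lambda>_. 0"]) (simp add: arc_product_sum_def)
next
  case (insert e M)
  note F = weighted_digraphD[OF wd]
  have "matching M" using insert.prems(2) unfolding matching_def by blast
  then obtain y' where y'1: "\<forall>v. \<bar>y' v\<bar> \<le> 1" and y'2: "\<forall>v. v \<notin> fst ` M \<union> snd ` M \<longrightarrow> y' v = 0"
    and y'3: "sum w M \<le> - arc_product_sum A w y'"
    using insert.IH insert.prems by auto
  obtain u v where e: "e = (u, v)" by force
  have eA: "e \<in> A" using insert.prems by auto
  have uv: "u \<noteq> v" using F(4) eA e by auto
  have vu: "(v, u) \<notin> A"
  proof
    assume "(v, u) \<in> A"
    then have "(u, u) \<in> A\<^sup>+" using eA e by (meson trancl.simps trancl_into_trancl)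
    then show False using acyc unfolding acyclic_def by blast
  qed
  have "u \<notin> fst ` M \<union> snd ` M" "v \<notin> fst ` M \<union> snd ` M"
    using insert.prems(2) insert.hyps(2) e unfolding matching_def by (force simp: image_iff)+
  then have y'u: "y' u = 0" and y'v: "y' v = 0" using y'2 by auto
  \<comment> \<open>\<open>\<delta>\<close> contributes \<open>-w e\<close> (the reverse arc is absent by acyclicity) plus a cross term
    linear in \<open>\<delta>\<close>, whose sign \<open>\<sigma>\<close> is chosen to make it nonpositive\<close>
  define \<delta> where "\<delta> x = (if x = u then 1 else if x = v then -1 else (0::real))" for x
  define T where "T = (\<Sum>f\<in>A. w f * (\<delta> (fst f) * y' (snd f) + y' (fst f) * \<delta> (snd f)))"
  define \<sigma> where "\<sigma> = (if T \<ge> 0 then -1 else (1::real))"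
  define y where "y x = y' x + \<sigma> * \<delta> x" for x
  have \<sigma>: "\<sigma> * \<sigma> = 1" "\<sigma> * T \<le> 0" unfolding \<sigma>_def by auto
  have "arc_product_sum A w y = (\<Sum>f\<in>A. w f * y' (fst f) * y' (snd f)
        + \<sigma> * (w f * (\<delta> (fst f) * y' (snd f) + y' (fst f) * \<delta> (snd f)))
        + (\<sigma> * \<sigma>) * (w f * \<delta> (fst f) * \<delta> (snd f)))"
    unfolding arc_product_sum_def y_def by (rule sum.cong[OF refl]) (simp add: algebra_simps)
  also have "\<dots> = arc_product_sum A w y' + \<sigma> * T + (\<Sum>f\<in>A. w f * \<delta> (fst f) * \<delta> (snd f))"
    unfolding arc_product_sum_def T_def \<sigma>(1) by (simp add: sum.distrib sum_distrib_left)
  also have "(\<Sum>f\<in>A. w f * \<delta> (fst f) * \<delta> (snd f)) = (\<Sum>f\<in>A. if f = e then - w e else 0)"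
  proof (rule sum.cong[OF refl])
    fix f assume "f \<in> A"
    then show "w f * \<delta> (fst f) * \<delta> (snd f) = (if f = e then - w e else 0)"
      using uv vu F(4)[of u] F(4)[of v] e unfolding \<delta>_def by (cases f) auto
  qed
  also have "\<dots> = - w e" using eA F(3) by simp
  finally have "arc_product_sum A w y = arc_product_sum A w y' + \<sigma> * T - w e" by simp
  then have "sum w (insert e M) \<le> - arc_product_sum A w y"
    using \<sigma>(2) y'3 insert.hyps by simp
  moreover have "\<bar>y x\<bar> \<le> 1" for x
    unfolding y_def \<delta>_def \<sigma>_def using y'1 y'u y'v by auto
  moreover have "y x = 0" if "x \<notin> fst ` insert e M \<union> snd ` insert e M" for x
    using that y'2 e unfolding y_def \<delta>_def by auto
  ultimately show ?case by blast
qed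

lemma matching_weight_le_surplus:
  assumes wd: "weighted_digraph V A w" and acyc: "acyclic A" and "M \<subseteq> A" "matching M"
  shows "sum w M \<le> 4 * mac_surplus V A w"
proof -
  have "finite M" using assms(3) weighted_digraphD(3)[OF wd] finite_subset by auto
  then obtain y where "\<forall>v. \<bar>y v\<bar> \<le> 1" and "sum w M \<le> - arc_product_sum A w y"
    using acyclic_matching_arc_product_sum[OF wd acyc _ assms(3,4)] by blast
  then show ?thesis
    using mac_ge_arc_product_sum[OF wd, of y] unfolding mac_surplus_def by auto
qed

lemma exists_maximal_matching:
  assumes "finite A"
  obtains M where "M \<subseteq> A" "matching M" "\<forall>f\<in>A. fst f \<in> fst ` M \<union> snd ` M \<or> snd f \<in> fst ` M \<union> snd ` M"
proof -
  let ?MM = "{M. M \<subseteq> A \<and> matching M}"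
  have finMM: "finite ?MM" using assms by (auto intro: finite_subset[of _ "Pow A"])
  have "{} \<in> ?MM" by (simp add: matching_def)
  then obtain M where M: "M \<in> ?MM" "card M = Max (card ` ?MM)"
    using Max_in[of "card ` ?MM"] finMM by fastforce
  have maxM: "card M' \<le> card M" if "M' \<in> ?MM" for M'
    using M(2) Max_ge[of "card ` ?MM" "card M'"] finMM that by auto
  have "\<forall>f\<in>A. fst f \<in> fst ` M \<union> snd ` M \<or> snd f \<in> fst ` M \<union> snd ` M"
  proof (rule ccontr)
    assume "\<not> ?thesis"
    then obtain f where fA: "f \<in> A" and nf: "fst f \<notin> fst ` M \<union> snd ` M" "snd f \<notin> fst ` M \<union> snd ` M"
      by blast
    have "insert f M \<in> ?MM"
      using M(1) fA nf unfolding matching_def by (auto simp: image_iff)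
    then have "card (insert f M) \<le> card M" by (rule maxM)
    moreover have "finite M" using M(1) assms finite_subset by auto
    moreover have "f \<notin> M" using nf by force
    ultimately show False by simp
  qed
  then show ?thesis using M(1) that by blast
qed

lemma small_vertex_cover:
  assumes wd: "weighted_digraph V A w" and acyc: "acyclic A" and w1: "\<forall>a\<in>A. w a \<ge> 1"
  obtains Q where "Q \<subseteq> V" "finite Q" "\<forall>f\<in>A. fst f \<in> Q \<or> snd f \<in> Q"
    "real (card Q) \<le> 8 * mac_surplus V A w"
proof -
  note F = weighted_digraphD[OF wd]
  obtain M where MA: "M \<subseteq> A" and mM: "matching M"
    and cover: "\<forall>f\<in>A. fst f \<in> fst ` M \<union> snd ` M \<or> snd f \<in> fst ` M \<union> snd ` M"
    using exists_maximal_matching[OF F(3)] by blast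
  have finM: "finite M" using MA F(3) finite_subset by auto
  have "card (fst ` M \<union> snd ` M) \<le> card (fst ` M) + card (snd ` M)" by (rule card_Un_le)
  also have "\<dots> \<le> 2 * card M" using card_image_le[OF finM, of fst] card_image_le[OF finM, of snd] by linarith
  finally have "real (card (fst ` M \<union> snd ` M)) \<le> 2 * real (card M)" by linarith
  also have "\<dots> \<le> 2 * sum w M" using card_le_sum_weight[of M w] w1 MA by auto
  also have "\<dots> \<le> 8 * mac_surplus V A w" using matching_weight_le_surplus[OF wd acyc MA mM] by simp
  finally show ?thesis
    by (rule that[rotated 3]) (use cover MA F(2) finM in \<open>auto simp: image_iff\<close>)
qed

lemma vertex_cover_inner_weight:
  assumes wd: "weighted_digraph V A w" and QV: "Q \<subseteq> V"
    and cover: "\<forall>f\<in>A. fst f \<in> Q \<or> snd f \<in> Q"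
  shows "total_weight A w - 2 * cut_weight A w Q Q \<le> 4 * mac_surplus V A w"
proof -
  note F = weighted_digraphD[OF wd]
  let ?arcs = "\<lambda>X Y. {(x, y) \<in> A. x \<in> X \<and> y \<in> Y}"
  have "A = ?arcs Q Q \<union> ?arcs Q (V - Q) \<union> ?arcs (V - Q) Q" using F(2) cover by auto
  then have "total_weight A w = sum w (?arcs Q Q \<union> ?arcs Q (V - Q) \<union> ?arcs (V - Q) Q)"
    unfolding total_weight_def by simp
  also have "\<dots> = sum w (?arcs Q Q \<union> ?arcs Q (V - Q)) + sum w (?arcs (V - Q) Q)"
    using F(3) by (intro sum.union_disjoint) (auto intro: finite_subset[OF _ F(3)])
  also have "sum w (?arcs Q Q \<union> ?arcs Q (V - Q)) = sum w (?arcs Q Q) + sum w (?arcs Q (V - Q))"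
    using F(3) by (intro sum.union_disjoint) (auto intro: finite_subset[OF _ F(3)])
  finally have "total_weight A w = cut_weight A w Q Q + cut_weight A w Q (V - Q) + cut_weight A w (V - Q) Q"
    unfolding cut_weight_def .
  moreover have "cut_weight A w Q (V - Q) \<le> mac V A w" by (rule cut_weight_le_mac[OF wd QV])
  moreover have "cut_weight A w (V - Q) (V - (V - Q)) \<le> mac V A w" by (rule cut_weight_le_mac[OF wd]) auto
  then have "cut_weight A w (V - Q) Q \<le> mac V A w" using QV by (simp add: double_diff)
  ultimately show ?thesis unfolding mac_surplus_def right_diff_distrib by linarith
qed

subsection \<open>Numbering along a topological order\<close>

lemma acyclic_topological_numbering:
  assumes "finite S" and acyc: "acyclic A" and finA: "finite A"
  obtains \<rho> :: "'a \<Rightarrow> nat" where "inj_on \<rho> S"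
    "\<And>a b. (a, b) \<in> A \<Longrightarrow> a \<in> S \<Longrightarrow> b \<in> S \<Longrightarrow> \<rho> a < \<rho> b"
proof -
  have "\<exists>\<rho>::'a \<Rightarrow> nat. inj_on \<rho> S \<and> (\<forall>a b. (a, b) \<in> A \<longrightarrow> a \<in> S \<longrightarrow> b \<in> S \<longrightarrow> \<rho> a < \<rho> b)"
    using assms(1)
  proof (induction S rule: finite_remove_induct)
    case empty
    then show ?case by auto
  next
    case (remove S)
    obtain z where z: "z \<in> S" "\<And>y. (y, z) \<in> A \<Longrightarrow> y \<notin> S"
      using wfE_min'[OF finite_acyclic_wf[OF finA acyc] remove.hyps(2)] by metis
    obtain \<rho>' :: "'a \<Rightarrow> nat" where inj: "inj_on \<rho>' (S - {z})"
      and incr: "\<forall>a b. (a, b) \<in> A \<longrightarrow> a \<in> S - {z} \<longrightarrow> b \<in> S - {z} \<longrightarrow> \<rho>' a < \<rho>' b"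
      using remove.IH[OF z(1)] by blast
    define \<rho> where "\<rho> x = (if x = z then 0 else Suc (\<rho>' x))" for x
    have "inj_on \<rho> S" using inj unfolding inj_on_def \<rho>_def by auto
    moreover have "\<forall>a b. (a, b) \<in> A \<longrightarrow> a \<in> S \<longrightarrow> b \<in> S \<longrightarrow> \<rho> a < \<rho> b"
      unfolding \<rho>_def using incr z(2) by auto
    ultimately show ?case by blast
  qed
  then show ?thesis using that by blast
qed

definition rank_in :: "'a set \<Rightarrow> ('a \<Rightarrow> nat) \<Rightarrow> 'a \<Rightarrow> nat" where
  "rank_in Q \<rho> x = card {c\<in>Q. \<rho> c < \<rho> x}"

lemma rank_in_le_card: "finite Q \<Longrightarrow> rank_in Q \<rho> x \<le> card Q"
  unfolding rank_in_def by (intro card_mono) auto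

lemma rank_in_mono: "finite Q \<Longrightarrow> \<rho> a \<le> \<rho> b \<Longrightarrow> rank_in Q \<rho> a \<le> rank_in Q \<rho> b"
  unfolding rank_in_def by (intro card_mono) auto

lemma rank_in_strict_mono:
  assumes "finite Q" "a \<in> Q" "\<rho> a < \<rho> b"
  shows "rank_in Q \<rho> a < rank_in Q \<rho> b"
proof -
  have "insert a {c\<in>Q. \<rho> c < \<rho> a} \<subseteq> {c\<in>Q. \<rho> c < \<rho> b}" using assms by auto
  then have "card (insert a {c\<in>Q. \<rho> c < \<rho> a}) \<le> rank_in Q \<rho> b"
    unfolding rank_in_def using assms(1) by (intro card_mono) auto
  then show ?thesis unfolding rank_in_def using assms(1) by simp
qed

lemma inj_on_rank_in:
  assumes "finite Q" "inj_on \<rho> Q"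
  shows "inj_on (rank_in Q \<rho>) Q"
proof (rule inj_onI)
  fix a b assume ab: "a \<in> Q" "b \<in> Q" "rank_in Q \<rho> a = rank_in Q \<rho> b"
  then have "\<not> \<rho> a < \<rho> b" "\<not> \<rho> b < \<rho> a" using rank_in_strict_mono[OF assms(1)] by force+
  then show "a = b" using assms(2) ab(1,2) by (metis inj_onD linorder_neqE_nat)
qed

subsection \<open>Short arcs\<close>

text \<open>Two arcs of span \<open>j\<close> whose tails lie in blocks \<open>[k j, (k+1) j)\<close> of equal parity share no
  endpoint: the head of one would lie in the block after the tail of the other.\<close>
lemma fixed_span_parity_matching:
  fixes pos :: "'a \<Rightarrow> nat"
  assumes inj: "inj_on pos Q" and j: "j > 0"
    and C: "\<forall>f\<in>C. fst f \<in> Q \<and> snd f \<in> Q \<and> pos (snd f) = pos (fst f) + j \<and> pos (fst f) div j mod 2 = c"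
  shows "matching C"
  unfolding matching_def
proof (intro ballI impI)
  fix e e' assume e: "e \<in> C" and e': "e' \<in> C" and ne: "e \<noteq> e'"
  obtain a b where ab: "e = (a, b)" by force
  obtain a' b' where ab': "e' = (a', b')" by force
  have h: "a \<in> Q" "b \<in> Q" "pos b = pos a + j" "pos a div j mod 2 = c"
    using C e ab by auto
  have h': "a' \<in> Q" "b' \<in> Q" "pos b' = pos a' + j" "pos a' div j mod 2 = c"
    using C e' ab' by auto
  have parity: "pos x div j mod 2 \<noteq> pos y div j mod 2" if "pos x = pos y + j" for x y
  proof -
    have "pos x div j = pos y div j + 1" using that j by simp
    moreover have "(k + 1) mod 2 \<noteq> k mod 2" for k :: nat by presburger
    ultimately show ?thesis by metis
  qed
  have "a \<noteq> a'"
  proof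
    assume "a = a'"
    then have "b = b'" using inj h h' unfolding inj_on_def by metis
    then show False using ne ab ab' \<open>a = a'\<close> by simp
  qed
  moreover have "b \<noteq> b'" using \<open>a \<noteq> a'\<close> inj h h' unfolding inj_on_def by force
  moreover have "a \<noteq> b'" "b \<noteq> a'" using parity h h' by metis+
  ultimately show "fst e \<noteq> fst e' \<and> fst e \<noteq> snd e' \<and> snd e \<noteq> fst e' \<and> snd e \<noteq> snd e'"
    using ab ab' by simp
qed

lemma short_arcs_weight_le:
  fixes pos :: "'a \<Rightarrow> nat" and w :: "'a \<times> 'a \<Rightarrow> real"
  assumes finA: "finite A" and inj: "inj_on pos Q"
    and incr: "\<forall>f\<in>A. fst f \<in> Q \<longrightarrow> snd f \<in> Q \<longrightarrow> pos (fst f) < pos (snd f)"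
    and match: "\<And>M. M \<subseteq> A \<Longrightarrow> matching M \<Longrightarrow> sum w M \<le> B"
  shows "sum w {f\<in>A. fst f \<in> Q \<and> snd f \<in> Q \<and> pos (snd f) - pos (fst f) \<le> s} \<le> 2 * real s * B"
proof -
  define S where "S = {f\<in>A. fst f \<in> Q \<and> snd f \<in> Q \<and> pos (snd f) - pos (fst f) \<le> s}"
  define span where "span f = pos (snd f) - pos (fst f)" for f
  define block where "block f = (span f, pos (fst f) div span f mod 2)" for f
  define T where "T = {1..s} \<times> {0..<(2::nat)}"
  have finS: "finite S" unfolding S_def using finA by simp
  have span: "pos (snd f) = pos (fst f) + span f" "span f \<ge> 1" if "f \<in> S" for f
    using that incr unfolding S_def span_def by fastforce+
  have "block ` S \<subseteq> T" unfolding block_def T_def using span unfolding S_def span_def by auto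
  then have "sum w S = (\<Sum>k\<in>T. sum w {f. f \<in> S \<and> block f = k})"
    using sum.group[OF finS _, of T block w] unfolding T_def by simp
  also have "\<dots> \<le> of_nat (card T) * B"
  proof (rule sum_bounded_above)
    fix k assume "k \<in> T"
    show "sum w {f. f \<in> S \<and> block f = k} \<le> B"
    proof (rule match)
      show "{f. f \<in> S \<and> block f = k} \<subseteq> A" unfolding S_def by auto
      show "matching {f. f \<in> S \<and> block f = k}"
        by (rule fixed_span_parity_matching[OF inj, of "fst k" _ "snd k"])
          (use \<open>k \<in> T\<close> span in \<open>auto simp: T_def block_def S_def\<close>)
    qed
  qed
  also have "card T = 2 * s" unfolding T_def by (simp add: card_cartesian_product)
  finally show ?thesis unfolding S_def by simp
qed

lemma weighted_sum_ge_above_threshold: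
  fixes h :: "'b \<Rightarrow> nat" and w :: "'b \<Rightarrow> real"
  assumes finE: "finite E" and w: "\<forall>f\<in>E. w f \<ge> 0"
  shows "(real s + 1) * (sum w E - sum w {f\<in>E. h f \<le> s}) \<le> (\<Sum>f\<in>E. w f * real (h f))"
proof -
  have "E - {f\<in>E. h f \<le> s} = {f\<in>E. \<not> h f \<le> s}" by auto
  then have "sum w E - sum w {f\<in>E. h f \<le> s} = sum w {f\<in>E. \<not> h f \<le> s}"
    using sum_diff[OF finE, of "{f\<in>E. h f \<le> s}" w] by auto
  then have "(real s + 1) * (sum w E - sum w {f\<in>E. h f \<le> s}) = (\<Sum>f\<in>{f\<in>E. \<not> h f \<le> s}. w f * (real s + 1))"
    by (simp add: sum_distrib_right[symmetric] mult.commute)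
  also have "\<dots> \<le> (\<Sum>f\<in>{f\<in>E. \<not> h f \<le> s}. w f * real (h f))"
    using w by (intro sum_mono mult_left_mono) auto
  also have "\<dots> \<le> (\<Sum>f\<in>E. w f * real (h f))"
    using finE w by (intro sum_mono2) auto
  finally show ?thesis .
qed

subsection \<open>The potential of a vertex cover\<close>

lemma position_increase_ge_long_arcs:
  fixes pos :: "'a \<Rightarrow> nat"
  assumes wd: "weighted_digraph V A w" and acyc: "acyclic A" and inj: "inj_on pos Q"
    and mono: "\<forall>f\<in>A. pos (fst f) \<le> pos (snd f)"
    and incr: "\<forall>f\<in>A. fst f \<in> Q \<longrightarrow> snd f \<in> Q \<longrightarrow> pos (fst f) < pos (snd f)"
  shows "(real s + 1) * (cut_weight A w Q Q - 8 * real s * mac_surplus V A w)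
           \<le> (\<Sum>f\<in>A. w f * (real (pos (snd f)) - real (pos (fst f))))"
proof -
  note F = weighted_digraphD[OF wd]
  define E where "E = {f\<in>A. fst f \<in> Q \<and> snd f \<in> Q}"
  define span where "span f = pos (snd f) - pos (fst f)" for f
  have finE: "finite E" and EA: "E \<subseteq> A" unfolding E_def using F(3) by auto
  have "{(x, y) \<in> A. x \<in> Q \<and> y \<in> Q} = E" unfolding E_def by auto
  then have \<beta>: "cut_weight A w Q Q = sum w E" unfolding cut_weight_def by simp
  have short_arcs: "{f\<in>A. fst f \<in> Q \<and> snd f \<in> Q \<and> pos (snd f) - pos (fst f) \<le> s} = {f\<in>E. span f \<le> s}"
    unfolding E_def span_def by auto
  have "sum w {f\<in>E. span f \<le> s} \<le> 2 * real s * (4 * mac_surplus V A w)"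
    using short_arcs_weight_le[OF F(3) inj incr matching_weight_le_surplus[OF wd acyc], of s]
    unfolding short_arcs .
  then have "(real s + 1) * (sum w E - 8 * real s * mac_surplus V A w)
      \<le> (real s + 1) * (sum w E - sum w {f\<in>E. span f \<le> s})"
    by (intro mult_left_mono) auto
  also have "\<dots> \<le> (\<Sum>f\<in>E. w f * real (span f))"
    using EA F(5) by (intro weighted_sum_ge_above_threshold finE) auto
  also have "\<dots> = (\<Sum>f\<in>E. w f * (real (pos (snd f)) - real (pos (fst f))))"
    unfolding span_def
  proof (rule sum.cong[OF refl])
    fix f assume "f \<in> E"
    then have "pos (fst f) \<le> pos (snd f)" using EA mono by auto
    then show "w f * real (pos (snd f) - pos (fst f)) = w f * (real (pos (snd f)) - real (pos (fst f)))"
      by (simp add: of_nat_diff)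
  qed
  also have "\<dots> \<le> (\<Sum>f\<in>A. w f * (real (pos (snd f)) - real (pos (fst f))))"
    using F(3,5) EA mono by (intro sum_mono2) auto
  finally show ?thesis using \<beta> by simp
qed

lemma topological_potential_bound:
  assumes wd: "weighted_digraph V A w" and acyc: "acyclic A"
    and QV: "Q \<subseteq> V" and Q: "Q \<noteq> {}" and W: "total_weight A w > 0"
  obtains L where "L\<^sup>2 \<le> 4 * total_weight A w * mac_surplus V A w"
    "\<And>s. (real s + 1) * (cut_weight A w Q Q - 8 * real s * mac_surplus V A w) \<le> real (card Q) * L"
proof -
  note F = weighted_digraphD[OF wd]
  have finQ: "finite Q" using QV F(1) finite_subset by auto
  define q where "q = real (card Q)"
  have q0: "q > 0" using finQ Q unfolding q_def by (simp add: card_gt_0_iff)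
  obtain \<rho> :: "'a \<Rightarrow> nat" where \<rho>: "inj_on \<rho> V"
    "\<And>a b. (a, b) \<in> A \<Longrightarrow> a \<in> V \<Longrightarrow> b \<in> V \<Longrightarrow> \<rho> a < \<rho> b"
    using acyclic_topological_numbering[OF F(1) acyc F(3)] by blast
  have arc_\<rho>: "\<rho> (fst f) < \<rho> (snd f)" if "f \<in> A" for f
    using \<rho>(2)[of "fst f" "snd f"] that F(2) by force
  define pos where "pos = rank_in Q \<rho>"
  have pos_mono: "\<forall>f\<in>A. pos (fst f) \<le> pos (snd f)"
    unfolding pos_def using rank_in_mono[OF finQ] arc_\<rho> less_imp_le by blast
  have pos_incr: "\<forall>f\<in>A. fst f \<in> Q \<longrightarrow> snd f \<in> Q \<longrightarrow> pos (fst f) < pos (snd f)"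
    unfolding pos_def using rank_in_strict_mono[OF finQ] arc_\<rho> by blast
  have pos_inj: "inj_on pos Q"
    unfolding pos_def using inj_on_rank_in[OF finQ inj_on_subset[OF \<rho>(1) QV]] .
  define t where "t x = real (pos x) / q" for x
  define L where "L = (\<Sum>f\<in>A. w f * (t (snd f) - t (fst f)))"
  have L: "L\<^sup>2 \<le> 4 * total_weight A w * mac_surplus V A w"
    unfolding L_def
  proof (rule potential_le_surplus[OF wd W])
    show "\<forall>x. 0 \<le> t x \<and> t x \<le> 1"
      unfolding t_def q_def pos_def using rank_in_le_card[OF finQ] q0 q_def by simp
    show "\<forall>f\<in>A. t (fst f) \<le> t (snd f)"
      unfolding t_def using pos_mono q0 by (simp add: divide_right_mono)
  qed
  have "(\<Sum>f\<in>A. w f * (real (pos (snd f)) - real (pos (fst f)))) = q * L"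
    unfolding L_def t_def sum_distrib_left using q0 by (intro sum.cong) (auto simp: field_simps)
  then show ?thesis
    using that[OF L] position_increase_ge_long_arcs[OF wd acyc pos_inj pos_mono pos_incr]
    unfolding q_def by simp
qed

lemma gt_three_times_three_fifths_power:
  fixes W r :: real
  assumes W0: "W > 0" and r6: "r > 6" and r5: "r ^ 5 = W ^ 3"
  shows "W > 3 * r"
proof (rule ccontr)
  have r0: "r > 0" using r6 by simp
  assume "\<not> W > 3 * r"
  then have "r ^ 5 \<le> 27 * r ^ 3"
    using W0 r5 power_mono[of W "3 * r" 3] by (simp add: power_mult_distrib)
  moreover have "r ^ 5 = r ^ 2 * r ^ 3" by (simp flip: power_add)
  ultimately have "r ^ 2 \<le> 27" using r0 by (metis mult_le_cancel_right_pos zero_less_power)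
  moreover have "6 * 6 < r * r" using r6 by (intro mult_strict_mono) auto
  ultimately show False by (simp add: power2_eq_square)
qed

text \<open>Here \<open>q\<close> stands for the size of the vertex cover, \<open>\<beta>\<close> for the weight inside it and \<open>L\<close> for the
  increase of the potential; the contradiction comes from the threshold \<open>s = \<lfloor>3\<beta>/(2r)\<rfloor>\<close>.\<close>
lemma surplus_bound_from_estimates:
  fixes W g q \<beta> L :: real
  assumes W0: "W > 0" and g1: "1 \<le> 4 * g"
    and q: "0 < q" "q \<le> 8 * g" and \<beta>: "W - 2 * \<beta> \<le> 4 * g"
    and L: "L\<^sup>2 \<le> 4 * W * g" "\<And>s::nat. (real s + 1) * (\<beta> - 8 * real s * g) \<le> q * L"
  shows "W powr 0.6 / 24 \<le> g"
proof (rule ccontr)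
  define r where "r = W powr 0.6"
  assume "\<not> r / 24 \<le> g"
  then have g: "g < r / 24" by simp
  then have r0: "r > 0" and "r > 6" using g1 by linarith+
  have "r ^ 5 = W powr (real 5 * 0.6)" unfolding r_def using W0 by (simp add: powr_power)
  then have r5: "r ^ 5 = W ^ 3" using W0 by (simp add: powr_realpow)
  have \<beta>W: "\<beta> > 17 * W / 36"
    using gt_three_times_three_fifths_power[OF W0 \<open>r > 6\<close> r5] \<beta> g by linarith
  then have \<beta>0: "\<beta> > 0" using W0 by simp
  define x where "x = 3 * \<beta> / (2 * r)"
  have x0: "x > 0" and xr: "x * r = 3 * \<beta> / 2" unfolding x_def using \<beta>0 r0 by auto
  define s where "s = nat \<lfloor>x\<rfloor>"
  have s: "real s \<le> x" "x < real s + 1" unfolding s_def using x0 by linarith+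
  have "8 * g \<le> r / 3" using g by simp
  then have "real s * (8 * g) \<le> real s * (r / 3)" by (rule mult_left_mono) simp
  then have "8 * real s * g \<le> real s * (r / 3)" by (simp add: ac_simps)
  also have "\<dots> \<le> x * (r / 3)" using s(1) r0 by (intro mult_right_mono) auto
  also have "\<dots> = \<beta> / 2" using xr by (simp add: field_simps)
  finally have "(real s + 1) * (\<beta> / 2) \<le> (real s + 1) * (\<beta> - 8 * real s * g)"
    by (intro mult_left_mono) auto
  then have "(real s + 1) * (\<beta> / 2) \<le> q * L" using L(2)[of s] by linarith
  moreover have "q * x\<^sup>2 < (r / 3) * (real s + 1) * x"
  proof -
    have "q * x\<^sup>2 < (r / 3) * x\<^sup>2" using q g x0 by (intro mult_strict_right_mono) auto
    also have "\<dots> < (r / 3) * (real s + 1) * x" using s(2) x0 r0 by (simp add: power2_eq_square)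
    finally show ?thesis .
  qed
  moreover have "(r / 3) * (real s + 1) * x = (real s + 1) * (\<beta> / 2)" using xr by (simp add: field_simps)
  ultimately have "q * x\<^sup>2 < q * L" by linarith
  then have "x\<^sup>2 < L" using q(1) by simp
  then have "(x\<^sup>2)\<^sup>2 < L\<^sup>2" using x0 by (intro power_strict_mono) auto
  also have "\<dots> < 4 * W * (r / 24)" using L(1) g W0 by (smt (verit) mult_strict_left_mono)
  finally have x4: "x ^ 4 < W * r / 6" by (simp flip: power_mult)
  have "(17 * W / 24) ^ 4 < (x * r) ^ 4" using xr \<beta>W W0 by (intro power_strict_mono) auto
  also have "\<dots> = x ^ 4 * r ^ 4" by (simp add: power_mult_distrib)
  also have "\<dots> < W * r / 6 * r ^ 4" using x4 r0 by simp
  also have "\<dots> = W ^ 4 / 6" using r5 by (simp add: eval_nat_numeral algebra_simps)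
  finally show False using W0 by (simp add: power_divide power4_eq_xxxx)
qed

theorem mainTheorem12:
  fixes V :: "'a set" and A :: "('a \<times> 'a) set" and w :: "'a \<times> 'a \<Rightarrow> real"
  assumes "weighted_digraph V A w"
    and "acyclic A"
    and "\<forall>a\<in>A. w a \<ge> 1"
  shows "mac V A w \<ge> total_weight A w / 4 + total_weight A w powr 0.6 / 24"
proof (cases "A = {}")
  case True
  have "cut_weight A w {} (V - {}) \<le> mac V A w" by (rule cut_weight_le_mac[OF assms(1)]) auto
  then show ?thesis using True by (simp add: total_weight_def cut_weight_def)
next
  case False
  note wd = assms(1) and acyc = assms(2)
  obtain e where e: "e \<in> A" using False by blast
  have "1 \<le> real (card A)" using False weighted_digraphD(3)[OF wd] by (simp add: Suc_le_eq card_gt_0_iff)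
  then have W0: "total_weight A w > 0"
    using card_le_sum_weight[OF assms(3)] unfolding total_weight_def by linarith
  obtain Q where QV: "Q \<subseteq> V" and "finite Q" and cover: "\<forall>f\<in>A. fst f \<in> Q \<or> snd f \<in> Q"
    and q: "real (card Q) \<le> 8 * mac_surplus V A w"
    using small_vertex_cover[OF wd acyc assms(3)] by blast
  have "Q \<noteq> {}" using cover e by auto
  then have q0: "real (card Q) > 0" using \<open>finite Q\<close> by (simp add: card_gt_0_iff)
  obtain L where "L\<^sup>2 \<le> 4 * total_weight A w * mac_surplus V A w"
    "\<And>s. (real s + 1) * (cut_weight A w Q Q - 8 * real s * mac_surplus V A w) \<le> real (card Q) * L"
    using topological_potential_bound[OF wd acyc QV \<open>Q \<noteq> {}\<close> W0] by blast
  moreover have "1 \<le> 4 * mac_surplus V A w"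
    using matching_weight_le_surplus[OF wd acyc, of "{e}"] e assms(3) by (force simp: matching_def)
  ultimately have "total_weight A w powr 0.6 / 24 \<le> mac_surplus V A w"
    using surplus_bound_from_estimates[OF W0 _ q0 q vertex_cover_inner_weight[OF wd QV cover]] by blast
  then show ?thesis unfolding mac_surplus_def by simp
qed

end
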